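(* Let $G$ be a knot grid diagram and $K$ the oriented planar knot diagram it determines. Then $$M(\mathbf x^+(G))=-\mathrm{writhe}(K)-\#\{\text{downward-oriented cusps}\}+1,\qquad M(\mathbf x^-(G))=-\mathrm{writhe}(K)-\#\{\text{upward-oriented cusps}\}+1,$$ where the cusps are those of the front projection of the associated Legendrian knot $\vec{\mathcal K}(G)$.
   Context: A grid diagram $G$ of grid number $n$ is an $n\times n$ array of unit squares in the plane with lower-left corner at the origin, some marked $X$ and some $O$, with exactly one $X$ and one $O$ (in different squares) in every row and column. Drawing horizontal segments from $O$ to $X$ in each row and vertical segments from $X$ to $O$ in each column, vertical over horizontal at crossings, gives an oriented planar diagram $K$; $G$ is a knot grid diagram if $K$ is a knot. $\mathrm{writhe}(K)$ is the number of positive minus the number of negative crossings of $K$. The oriented Legendrian knot $\vec{\mathcal K}(G)$ has front projection obtained from $K$ by smoothing northwest and southeast corners, turning southwest and northeast corners into cusps, and rotating $45^\circ$ clockwise; a cusp is downward- (resp. upward-) oriented if the front is traversed downward (resp. upward) through it. Write $\mathbb O$ for the set of centers of the $O$-squares. $\mathbf S(G)$ is the set of $n$-tuples of integer points in $[0,n)^2$ with exactly one point on each line $y=k$ and each line $x=k$, $0\le k<n$. For finite sets $A,B$ let $\mathcal I(A,B)=\#\{(a,b)\in A\times B:a_1<b_1,a_2<b_2\}$, $\mathcal J(A,B)=\frac12(\mathcal I(A,B)+\mathcal I(B,A))$, extended bilinearly; $M(\mathbf x)=\mathcal J(\mathbf x-\mathbb O,\mathbf x-\mathbb O)+1$ (independent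 of the choice of fundamental domain for the torus). $\mathbf x^+(G)$ (resp. $\mathbf x^-(G)$) is the generator whose points are the upper right (resp. lower left) corners of the squares marked $X$. *)

theory Defs
  imports Main Complex_Main
begin

(* A grid diagram of grid number n is encoded by two functions on columns:
   column i (0 <= i < n) has its X in the square [i,i+1]x[sX i, sX i+1]
   and its O in the square [i,i+1]x[sO i, sO i+1]. *)

definition grid_diagram :: "nat \<Rightarrow> (nat \<Rightarrow> nat) \<Rightarrow> (nat \<Rightarrow> nat) \<Rightarrow> bool" where
  "grid_diagram n sX sO \<longleftrightarrow>
     bij_betw sX {..<n} {..<n} \<and> bij_betw sO {..<n} {..<n} \<and> (\<forall>i<n. sX i \<noteq> sO i)"

definition xcol :: "nat \<Rightarrow> (nat \<Rightarrow> nat) \<Rightarrow> nat \<Rightarrow> nat" where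
  "xcol n sX r = inv_into {..<n} sX r"

definition ocol :: "nat \<Rightarrow> (nat \<Rightarrow> nat) \<Rightarrow> nat \<Rightarrow> nat" where
  "ocol n sO r = inv_into {..<n} sO r"

(* following the knot: from the X in column i go vertically to the O in column i,
   then horizontally to the X in that row *)
definition grid_next :: "nat \<Rightarrow> (nat \<Rightarrow> nat) \<Rightarrow> (nat \<Rightarrow> nat) \<Rightarrow> nat \<Rightarrow> nat" where
  "grid_next n sX sO i = xcol n sX (sO i)"

definition knot_grid :: "nat \<Rightarrow> (nat \<Rightarrow> nat) \<Rightarrow> (nat \<Rightarrow> nat) \<Rightarrow> bool" where
  "knot_grid n sX sO \<longleftrightarrow> grid_diagram n sX sO \<and>
     (\<forall>i<n. \<forall>j<n. \<exists>k. (grid_next n sX sO ^^ k) i = j)"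

(* vertical segment of column i crosses horizontal segment of row j *)
definition grid_crossing :: "nat \<Rightarrow> (nat \<Rightarrow> nat) \<Rightarrow> (nat \<Rightarrow> nat) \<Rightarrow> nat \<Rightarrow> nat \<Rightarrow> bool" where
  "grid_crossing n sX sO i j \<longleftrightarrow>
     min (sX i) (sO i) < j \<and> j < max (sX i) (sO i) \<and>
     min (ocol n sO j) (xcol n sX j) < i \<and> i < max (ocol n sO j) (xcol n sX j)"

(* sign of such a crossing (vertical strand, oriented X to O, passes over the
   horizontal strand, oriented O to X): positive iff cross(over, under) > 0 *)
definition crossing_sign :: "nat \<Rightarrow> (nat \<Rightarrow> nat) \<Rightarrow> (nat \<Rightarrow> nat) \<Rightarrow> nat \<Rightarrow> nat \<Rightarrow> int" where
  "crossing_sign n sX sO i j =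
     - ((if sX i < sO i then 1 else -1) * (if ocol n sO j < xcol n sX j then 1 else -1))"

definition grid_writhe :: "nat \<Rightarrow> (nat \<Rightarrow> nat) \<Rightarrow> (nat \<Rightarrow> nat) \<Rightarrow> int" where
  "grid_writhe n sX sO =
     (\<Sum>i<n. \<Sum>j<n. if grid_crossing n sX sO i j then crossing_sign n sX sO i j else 0)"

(* Corners of K sit at the markings.  At the X of column i (row r = sX i) the
   horizontal segment leaves towards ocol r and the vertical one towards sO i;
   at the O of column i (row r = sO i) the horizontal segment leaves towards
   xcol r and the vertical one towards sX i.  Southwest corners (segments go
   east and north) become left cusps, northeast corners (west and south) become
   right cusps.  The knot passes through an X along horizontal-then-vertical
   and through an O along vertical-then-horizontal; after rotating 45 degrees
   clockwise this gives the following orientations. *)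

definition down_cusps :: "nat \<Rightarrow> (nat \<Rightarrow> nat) \<Rightarrow> (nat \<Rightarrow> nat) \<Rightarrow> nat" where
  "down_cusps n sX sO =
     card {i. i < n \<and> ocol n sO (sX i) < i \<and> sO i < sX i}   \<comment> \<open>NE corners at X\<close>
   + card {i. i < n \<and> i < xcol n sX (sO i) \<and> sO i < sX i}  \<comment> \<open>SW corners at O\<close>"

definition up_cusps :: "nat \<Rightarrow> (nat \<Rightarrow> nat) \<Rightarrow> (nat \<Rightarrow> nat) \<Rightarrow> nat" where
  "up_cusps n sX sO =
     card {i. i < n \<and> i < ocol n sO (sX i) \<and> sX i < sO i}   \<comment> \<open>SW corners at X\<close>
   + card {i. i < n \<and> xcol n sX (sO i) < i \<and> sX i < sO i}  \<comment> \<open>NE corners at O\<close>"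

definition I_pairs :: "(real \<times> real) set \<Rightarrow> (real \<times> real) set \<Rightarrow> nat" where
  "I_pairs A B = card {(a, b). a \<in> A \<and> b \<in> B \<and> fst a < fst b \<and> snd a < snd b}"

definition J_pairs :: "(real \<times> real) set \<Rightarrow> (real \<times> real) set \<Rightarrow> real" where
  "J_pairs A B = (real (I_pairs A B) + real (I_pairs B A)) / 2"

definition O_centers :: "nat \<Rightarrow> (nat \<Rightarrow> nat) \<Rightarrow> (real \<times> real) set" where
  "O_centers n sO = {(real i + 1/2, real (sO i) + 1/2) | i. i < n}"

(* M(x) = J(x - O, x - O) + 1, expanded bilinearly *)
definition maslov :: "nat \<Rightarrow> (nat \<Rightarrow> nat) \<Rightarrow> (real \<times> real) set \<Rightarrow> real" where
  "maslov n sO x =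
     J_pairs x x - J_pairs x (O_centers n sO) - J_pairs (O_centers n sO) x
     + J_pairs (O_centers n sO) (O_centers n sO) + 1"

(* x^+ : upper right corners of the X squares (reduced to [0,n)^2);
   x^- : lower left corners of the X squares *)
definition x_plus :: "nat \<Rightarrow> (nat \<Rightarrow> nat) \<Rightarrow> (real \<times> real) set" where
  "x_plus n sX = {(real ((i + 1) mod n), real ((sX i + 1) mod n)) | i. i < n}"

definition x_minus :: "nat \<Rightarrow> (nat \<Rightarrow> nat) \<Rightarrow> (real \<times> real) set" where
  "x_minus n sX = {(real i, real (sX i)) | i. i < n}"

end

theory Submission
  imports Defs
begin

(* Both M(x^-) - 1 and the writhe are sums over ordered pairs of columns.  For the writhe,
   split each horizontal segment into the two half-lines starting at its ends: summing over
   rows then gives a pair sum, up to a correction by the northeast corners of K, where a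
   vertical segment passes through an end of a horizontal one.  Adding the two pair sums, the
   indicators of each pair cancel by trichotomy except where the X of one column and the O of
   the other share a row; counting marks row by row turns what is left, together with the
   northeast corners, into minus the number of upward cusps.  The statement for x^+ is the one
   for x^- on the diagram with X and O exchanged, which is K with the opposite orientation: its
   writhe is the same and its upward cusps are the downward cusps of K. *)

declare sum_of_bool_eq [simp del] sum_mult_of_bool_eq [simp del] sum_of_bool_mult_eq [simp del]

lemma of_nat_card_eq_sum_of_bool:
  "of_nat (card {i. i < (n::nat) \<and> P i}) = (\<Sum>i<n. of_bool (P i) :: 'a::semiring_1)"
  by (simp add: sum_of_bool_eq Collect_conj_eq lessThan_def)

lemma sum_of_bool_eq_at_inv_into:
  assumes "finite A" "bij_betw f A B" "c \<in> B"
  shows "(\<Sum>x\<in>A. of_bool (f x = c \<and> P x)) = (of_bool (P (inv_into A f c)) :: 'a::semiring_1)"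
proof -
  have "f x = c \<longleftrightarrow> x = inv_into A f c" if "x \<in> A" for x
    using assms(2,3) that by (metis bij_betw_def f_inv_into_f inv_into_f_f)
  then have "(\<Sum>x\<in>A. of_bool (f x = c \<and> P x))
      = (\<Sum>x\<in>A. if x = inv_into A f c then of_bool (P x) else (0::'a))"
    by (intro sum.cong) auto
  also have "\<dots> = of_bool (P (inv_into A f c))"
    using assms by (simp add: bij_betw_def inv_into_into)
  finally show ?thesis .
qed

lemma sum_of_bool_eq_conj:
  assumes "finite A" "a \<in> A"
  shows "(\<Sum>x\<in>A. of_bool (x = a \<and> P x)) = (of_bool (P a) :: 'a::semiring_1)"
proof -
  have "(\<Sum>x\<in>A. of_bool (x = a \<and> P x)) = (\<Sum>x\<in>A. if x = a then of_bool (P a) else (0::'a))"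
    by (intro sum.cong) auto
  then show ?thesis
    using assms by simp
qed

lemma of_bool_less_add_of_bool_less:
  "of_bool (a < b) + of_bool (b < a) = (1 - of_bool (a = b) :: 'a::ring_1)" for a b :: "'b::linorder"
  by (cases a b rule: linorder_cases) auto

lemma of_bool_le_add_of_bool_less:
  "of_bool (a \<le> b) + of_bool (b < a) = (1 :: 'a::semiring_1)" for a b :: "'b::linorder"
  by auto

lemma of_nat_I_pairs_image:
  assumes "finite A" "finite B" "inj_on p A" "inj_on q B"
  shows "of_nat (I_pairs (p ` A) (q ` B)) =
    (\<Sum>a\<in>A. \<Sum>b\<in>B. of_bool (fst (p a) < fst (q b) \<and> snd (p a) < snd (q b)) :: 'c::semiring_1)"
proof -
  let ?less = "\<lambda>(a, b). fst (p a) < fst (q b) \<and> snd (p a) < snd (q b)"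
  have "{(u, v). u \<in> p ` A \<and> v \<in> q ` B \<and> fst u < fst v \<and> snd u < snd v}
      = map_prod p q ` (A \<times> B \<inter> {ab. ?less ab})"
    by auto
  moreover have "inj_on (map_prod p q) (A \<times> B \<inter> {ab. ?less ab})"
    using assms(3,4) by (auto simp: inj_on_def)
  ultimately have "I_pairs (p ` A) (q ` B) = card (A \<times> B \<inter> {ab. ?less ab})"
    unfolding I_pairs_def by (simp add: card_image)
  then show ?thesis
    using assms(1,2) by (simp add: sum_of_bool_eq[symmetric] sum.cartesian_product case_prod_beta)
qed

lemma of_nat_less_of_nat_add_half_iff: "real a < real b + 1/2 \<longleftrightarrow> a \<le> b"
proof
  assume "real a < real b + 1/2"
  then have "real a < real (b + 1)" by simp
  then show "a \<le> b" by linarith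
qed simp

lemma of_nat_add_half_less_of_nat_iff: "real a + 1/2 < real b \<longleftrightarrow> a < b"
proof
  assume "a < b"
  then have "real a + 1 \<le> real b" by linarith
  then show "real a + 1/2 < real b" by simp
qed simp

lemma maslov_of_nat_points_eq_sum:
  fixes c r sO :: "nat \<Rightarrow> nat"
  assumes "inj_on c {..<n}"
  shows "maslov n sO {(real (c i), real (r i)) | i. i < n} = of_int (1 + (\<Sum>i<n. \<Sum>j<n.
      of_bool (c i < c j \<and> r i < r j) + of_bool (i < j \<and> sO i < sO j)
    - of_bool (c i \<le> j \<and> r i \<le> sO j) - of_bool (i < c j \<and> sO i < r j)))"
proof -
  define x where "x = (\<lambda>i. (real (c i), real (r i)))"
  define ctr where "ctr = (\<lambda>i. (real i + 1/2, real (sO i) + 1/2))"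
  have sets: "{(real (c i), real (r i)) | i. i < n} = x ` {..<n}" "O_centers n sO = ctr ` {..<n}"
    unfolding x_def ctr_def O_centers_def by auto
  have inj: "inj_on x {..<n}" "inj_on ctr {..<n}"
    using assms unfolding x_def ctr_def inj_on_def by auto
  note I = of_nat_I_pairs_image[where 'c = int, OF finite_lessThan finite_lessThan]
  have "maslov n sO (x ` {..<n}) = of_int (int (I_pairs (x ` {..<n}) (x ` {..<n}))
      - int (I_pairs (x ` {..<n}) (ctr ` {..<n})) - int (I_pairs (ctr ` {..<n}) (x ` {..<n}))
      + int (I_pairs (ctr ` {..<n}) (ctr ` {..<n})) + 1)"
    unfolding maslov_def J_pairs_def sets by (simp add: field_simps)
  also have "\<dots> = of_int (1 + (\<Sum>i<n. \<Sum>j<n.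
      of_bool (c i < c j \<and> r i < r j) + of_bool (i < j \<and> sO i < sO j)
    - of_bool (c i \<le> j \<and> r i \<le> sO j) - of_bool (i < c j \<and> sO i < r j)))"
    unfolding I[OF inj(1) inj(1)] I[OF inj(1) inj(2)] I[OF inj(2) inj(1)] I[OF inj(2) inj(2)]
    by (simp add: x_def ctr_def of_nat_less_of_nat_add_half_iff of_nat_add_half_less_of_nat_iff
        sum.distrib sum_subtractf)
  finally show ?thesis
    unfolding sets .
qed

definition maslov_summand :: "(nat \<Rightarrow> nat) \<Rightarrow> (nat \<Rightarrow> nat) \<Rightarrow> nat \<Rightarrow> nat \<Rightarrow> int" where
  "maslov_summand sX sO i j =
     of_bool (i < j \<and> sX i < sX j) + of_bool (i < j \<and> sO i < sO j)
   - of_bool (i \<le> j \<and> sX i \<le> sO j) - of_bool (i < j \<and> sO i < sX j)"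

lemma maslov_x_minus_eq_sum:
  "maslov n sO (x_minus n sX) = of_int (1 + (\<Sum>i<n. \<Sum>j<n. maslov_summand sX sO i j))"
  using maslov_of_nat_points_eq_sum[where c = "\<lambda>i. i" and r = sX]
  unfolding x_minus_def maslov_summand_def by simp

lemma maslov_x_plus_eq_sum:
  "maslov n sO (x_plus n sX) = of_int (1 + (\<Sum>i<n. \<Sum>j<n.
      of_bool ((i + 1) mod n < (j + 1) mod n \<and> (sX i + 1) mod n < (sX j + 1) mod n)
    + of_bool (i < j \<and> sO i < sO j)
    - of_bool ((i + 1) mod n \<le> j \<and> (sX i + 1) mod n \<le> sO j)
    - of_bool (i < (j + 1) mod n \<and> sO i < (sX j + 1) mod n)))"
proof -
  have "inj_on (\<lambda>i. (i + 1) mod n) {..<n}"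
    by (rule inj_onI) (auto simp: mod_if split: if_splits)
  then show ?thesis
    using maslov_of_nat_points_eq_sum[where c = "\<lambda>i. (i + 1) mod n" and r = "\<lambda>i. (sX i + 1) mod n"]
    unfolding x_plus_def by simp
qed

definition wrap_summand :: "nat \<Rightarrow> (nat \<Rightarrow> nat) \<Rightarrow> (nat \<Rightarrow> nat) \<Rightarrow> nat \<Rightarrow> nat \<Rightarrow> int" where
  "wrap_summand n sX sO i j =
     of_bool (Suc i = n) * (of_bool (sX i < sX j) - of_bool (sX i < sO j) - of_bool (Suc (sX j) = n))
   + of_bool (Suc j = n) * (of_bool (sO i \<le> sX j) - of_bool (sX i < sX j) - of_bool (Suc (sX i) = n))
   + of_bool (j = i \<and> Suc (sX i) = n)"

lemma x_plus_summand_eq: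
  assumes "i < n" "j < n" "sX i < n" "sX j < n" "sO i < n" "sO j < n"
  shows "of_bool ((i + 1) mod n < (j + 1) mod n \<and> (sX i + 1) mod n < (sX j + 1) mod n)
    + of_bool (i < j \<and> sO i < sO j)
    - of_bool ((i + 1) mod n \<le> j \<and> (sX i + 1) mod n \<le> sO j)
    - of_bool (i < (j + 1) mod n \<and> sO i < (sX j + 1) mod n)
    = maslov_summand sO sX i j + wrap_summand n sX sO i j"
  using assms unfolding maslov_summand_def wrap_summand_def by (simp add: mod_if)

lemma grid_diagram_swap: "grid_diagram n sX sO \<Longrightarrow> grid_diagram n sO sX"
  unfolding grid_diagram_def by auto

lemma grid_writhe_swap: "grid_writhe n sO sX = grid_writhe n sX sO"
  unfolding grid_writhe_def grid_crossing_def crossing_sign_def xcol_def ocol_def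
  by (intro sum.cong refl) (auto simp: min_def max_def)

lemma up_cusps_swap: "up_cusps n sO sX = down_cusps n sX sO"
  unfolding up_cusps_def down_cusps_def xcol_def ocol_def by (simp add: conj_commute)

(* the northeast corners of K, which become the right cusps of the front *)
definition right_cusps :: "nat \<Rightarrow> (nat \<Rightarrow> nat) \<Rightarrow> (nat \<Rightarrow> nat) \<Rightarrow> nat" where
  "right_cusps n sX sO =
     card {i. i < n \<and> ocol n sO (sX i) < i \<and> sO i < sX i}
   + card {i. i < n \<and> xcol n sX (sO i) < i \<and> sX i < sO i}"

definition writhe_summand :: "(nat \<Rightarrow> nat) \<Rightarrow> (nat \<Rightarrow> nat) \<Rightarrow> nat \<Rightarrow> nat \<Rightarrow> int" where
  "writhe_summand sX sO i j = of_bool (j < i) *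
     (of_bool (sX i < sX j) + of_bool (sO i < sO j) - of_bool (sX i < sO j) - of_bool (sO i < sX j))"

locale grid =
  fixes n :: nat and sX sO :: "nat \<Rightarrow> nat"
  assumes grid_diagram: "grid_diagram n sX sO"
begin

lemma bij_sX: "bij_betw sX {..<n} {..<n}"
  and bij_sO: "bij_betw sO {..<n} {..<n}"
  and sX_neq_sO: "i < n \<Longrightarrow> sX i \<noteq> sO i"
  using grid_diagram unfolding grid_diagram_def by auto

lemma sX_less: "i < n \<Longrightarrow> sX i < n"
  and sO_less: "i < n \<Longrightarrow> sO i < n"
  using bij_sX bij_sO by (auto simp: bij_betw_def)

lemma sX_eq_iff: "i < n \<Longrightarrow> j < n \<Longrightarrow> sX i = sX j \<longleftrightarrow> i = j"
  and sO_eq_iff: "i < n \<Longrightarrow> j < n \<Longrightarrow> sO i = sO j \<longleftrightarrow> i = j"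
  using bij_sX bij_sO by (auto simp: bij_betw_def inj_on_def)

lemma sum_reindex_sX: "(\<Sum>i<n. g (sX i)) = (\<Sum>r<n. g r)"
  and sum_reindex_sO: "(\<Sum>i<n. g (sO i)) = (\<Sum>r<n. g r)"
  using sum.reindex_bij_betw[OF bij_sX] sum.reindex_bij_betw[OF bij_sO] .

lemma xcol_less: "r < n \<Longrightarrow> xcol n sX r < n"
  and sX_xcol: "r < n \<Longrightarrow> sX (xcol n sX r) = r"
  and xcol_sX: "i < n \<Longrightarrow> xcol n sX (sX i) = i"
  using bij_betw_inv_into[OF bij_sX] bij_betw_inv_into_left[OF bij_sX] bij_betw_inv_into_right[OF bij_sX]
  unfolding xcol_def by (auto simp: bij_betw_def)

lemma sO_ocol: "r < n \<Longrightarrow> sO (ocol n sO r) = r"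
  and ocol_sO: "i < n \<Longrightarrow> ocol n sO (sO i) = i"
  using bij_betw_inv_into_left[OF bij_sO] bij_betw_inv_into_right[OF bij_sO]
  unfolding ocol_def by auto

lemma bij_grid_next: "bij_betw (grid_next n sX sO) {..<n} {..<n}"
  using bij_betw_trans[OF bij_sO bij_betw_inv_into[OF bij_sX]]
  unfolding grid_next_def[abs_def] xcol_def comp_def .

(* Each row and each column contains one X and one O, so the terms of the marks moved across
   the top and right edges of the torus cancel. *)
lemma sum_wrap_summand_eq_0: "(\<Sum>i<n. \<Sum>j<n. wrap_summand n sX sO i j) = 0"
proof (cases n)
  case (Suc N)
  have at_top: "(\<Sum>i<n. of_bool (Suc i = n) * f i) = (f N :: int)" for f
  proof -
    have "(\<Sum>i<n. of_bool (Suc i = n) * f i) = (\<Sum>i<n. if i = N then f i else 0)"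
      using Suc by (intro sum.cong) auto
    then show ?thesis
      using Suc by simp
  qed
  have row: "(\<Sum>i<n. \<Sum>j<n. of_bool (Suc i = n) * R i j) = (\<Sum>j<n. R N j :: int)" for R
    by (simp only: sum_distrib_left[symmetric] at_top)
  have col: "(\<Sum>i<n. \<Sum>j<n. of_bool (Suc j = n) * C i j) = (\<Sum>i<n. C i N :: int)" for C
    by (simp only: sum_distrib_left[symmetric] at_top sum.swap[of _ "{..<n}" "{..<n}"])
  have diag: "(\<Sum>i<n. \<Sum>j<n. of_bool (j = i \<and> P i)) = (\<Sum>i<n. of_bool (P i) :: int)" for P
    by (intro sum.cong refl) (simp add: sum_of_bool_eq_conj)
  have X_in_top_row: "(\<Sum>i<n. of_bool (Suc (sX i) = n)) = (1 :: int)"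
    using at_top[of "\<lambda>_. 1"] sum_reindex_sX[of "\<lambda>r. of_bool (Suc r = n) :: int"] by simp
  have above_X_N: "(\<Sum>j<n. of_bool (sX N < sX j) - of_bool (sX N < sO j)) = (0 :: int)"
    using sum_reindex_sX[of "\<lambda>r. of_bool (sX N < r) :: int"]
      sum_reindex_sO[of "\<lambda>r. of_bool (sX N < r) :: int"]
    by (simp add: sum_subtractf)
  have "(\<Sum>i<n. of_bool (sO i \<le> sX N) - of_bool (sX i < sX N))
      = (\<Sum>r<n. of_bool (r \<le> sX N) - of_bool (r < sX N) :: int)"
    using sum_reindex_sO[of "\<lambda>r. of_bool (r \<le> sX N) :: int"]
      sum_reindex_sX[of "\<lambda>r. of_bool (r < sX N) :: int"]
    by (simp add: sum_subtractf)
  also have "\<dots> = (\<Sum>r<n. of_bool (r = sX N))"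
    by (intro sum.cong) auto
  also have "\<dots> = 1"
    using sX_less[of N] Suc by (simp add: sum_of_bool_eq lessThan_def)
  finally have below_X_N: "(\<Sum>i<n. of_bool (sO i \<le> sX N) - of_bool (sX i < sX N)) = (1 :: int)" .
  show ?thesis
    using X_in_top_row above_X_N below_X_N unfolding wrap_summand_def
    by (simp only: sum.distrib row col diag sum_subtractf)
qed simp

(* Up to the reduction mod n, the formal difference x^+ - O is minus x^-(O) - X translated by
   (1/2, 1/2), and J is bilinear and invariant under translation. *)
lemma maslov_x_plus_eq_maslov_swap: "maslov n sO (x_plus n sX) = maslov n sX (x_minus n sO)"
proof -
  have "(\<Sum>i<n. \<Sum>j<n.
      of_bool ((i + 1) mod n < (j + 1) mod n \<and> (sX i + 1) mod n < (sX j + 1) mod n)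
    + of_bool (i < j \<and> sO i < sO j)
    - of_bool ((i + 1) mod n \<le> j \<and> (sX i + 1) mod n \<le> sO j)
    - of_bool (i < (j + 1) mod n \<and> sO i < (sX j + 1) mod n))
    = (\<Sum>i<n. \<Sum>j<n. maslov_summand sO sX i j) + (\<Sum>i<n. \<Sum>j<n. wrap_summand n sX sO i j)"
    unfolding sum.distrib[symmetric]
    by (intro sum.cong refl) (rule x_plus_summand_eq; simp add: sX_less sO_less)
  then show ?thesis
    unfolding maslov_x_plus_eq_sum maslov_x_minus_eq_sum sum_wrap_summand_eq_0 by simp
qed

(* The horizontal segment in row sO k runs from column k to column grid_next k; its crossing
   with column i is the difference of the half-lines starting at these two ends, corrected when
   column i contains one of the ends. *)
lemma crossing_in_row_sO:
  assumes "i < n" "k < n"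
  shows "(if grid_crossing n sX sO i (sO k) then crossing_sign n sX sO i (sO k) else 0)
    = (of_bool (k < i) - of_bool (grid_next n sX sO k < i)) * (of_bool (sO i < sO k) - of_bool (sX i < sO k))
      - of_bool (sO k = sX i \<and> k < i \<and> sO i < sX i)
      - of_bool (k = i \<and> grid_next n sX sO k < i \<and> sX i < sO i)"
proof -
  define m where "m = grid_next n sX sO k"
  have m: "m < n" "xcol n sX (sO k) = m" "sX m = sO k"
    using assms by (auto simp: m_def grid_next_def xcol_less sX_xcol sO_less)
  have "k \<noteq> m" "sX i \<noteq> sO i" "sO i = sO k \<longleftrightarrow> i = k" "sX i = sO k \<longleftrightarrow> i = m"
    using assms m sX_neq_sO sO_eq_iff sX_eq_iff by metis+
  then show ?thesis
    unfolding grid_crossing_def crossing_sign_def m_def[symmetric] m(2) ocol_sO[OF assms(2)]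
    by (auto simp: min_def max_def)
qed

lemma sum_crossings_in_column:
  assumes "i < n"
  shows "(\<Sum>r<n. if grid_crossing n sX sO i r then crossing_sign n sX sO i r else 0)
    = (\<Sum>j<n. writhe_summand sX sO i j)
      - of_bool (ocol n sO (sX i) < i \<and> sO i < sX i) - of_bool (xcol n sX (sO i) < i \<and> sX i < sO i)"
proof -
  let ?m = "grid_next n sX sO"
  define F :: "nat \<Rightarrow> int" where "F r = of_bool (sO i < r) - of_bool (sX i < r)" for r
  have sX_next: "sX (?m k) = sO k" if "k < n" for k
    using that by (simp add: grid_next_def sX_xcol sO_less)
  have "(\<Sum>k<n. (of_bool (k < i) - of_bool (?m k < i)) * F (sO k))
      = (\<Sum>k<n. of_bool (k < i) * F (sO k)) - (\<Sum>k<n. of_bool (?m k < i) * F (sX (?m k)))"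
    by (simp add: left_diff_distrib sum_subtractf sX_next)
  also have "\<dots> = (\<Sum>j<n. of_bool (j < i) * (F (sO j) - F (sX j)))"
    using sum.reindex_bij_betw[OF bij_grid_next, of "\<lambda>j. of_bool (j < i) * F (sX j)"]
    by (simp add: right_diff_distrib sum_subtractf)
  also have "\<dots> = (\<Sum>j<n. writhe_summand sX sO i j)"
    unfolding writhe_summand_def F_def by (simp add: algebra_simps)
  finally have halflines: "(\<Sum>k<n. (of_bool (k < i) - of_bool (?m k < i)) * F (sO k))
      = (\<Sum>j<n. writhe_summand sX sO i j)" .
  have at_X: "(\<Sum>k<n. of_bool (sO k = sX i \<and> k < i \<and> sO i < sX i))
      = (of_bool (ocol n sO (sX i) < i \<and> sO i < sX i) :: int)"
    unfolding ocol_def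
    by (rule sum_of_bool_eq_at_inv_into[OF finite_lessThan bij_sO]) (simp add: assms sX_less)
  have at_O: "(\<Sum>k<n. of_bool (k = i \<and> ?m k < i \<and> sX i < sO i))
      = (of_bool (xcol n sX (sO i) < i \<and> sX i < sO i) :: int)"
    using sum_of_bool_eq_conj[of "{..<n}" i "\<lambda>k. ?m k < i \<and> sX i < sO i"] assms
    by (simp add: grid_next_def)
  have "(\<Sum>r<n. if grid_crossing n sX sO i r then crossing_sign n sX sO i r else 0)
      = (\<Sum>k<n. if grid_crossing n sX sO i (sO k) then crossing_sign n sX sO i (sO k) else 0)"
    by (rule sum_reindex_sO[symmetric])
  also have "\<dots> = (\<Sum>k<n. (of_bool (k < i) - of_bool (?m k < i)) * F (sO k))
      - (\<Sum>k<n. of_bool (sO k = sX i \<and> k < i \<and> sO i < sX i))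
      - (\<Sum>k<n. of_bool (k = i \<and> ?m k < i \<and> sX i < sO i))"
    unfolding sum_subtractf[symmetric] F_def using assms
    by (intro sum.cong refl) (simp add: crossing_in_row_sO)
  finally show ?thesis
    unfolding halflines at_X at_O .
qed

lemma grid_writhe_add_right_cusps:
  "grid_writhe n sX sO + int (right_cusps n sX sO) = (\<Sum>i<n. \<Sum>j<n. writhe_summand sX sO i j)"
  unfolding grid_writhe_def right_cusps_def of_nat_add of_nat_card_eq_sum_of_bool
  by (simp add: sum_crossings_in_column sum_subtractf)

(* For i < j the eight indicators cancel in pairs by trichotomy, except that the O of column i
   and the X of column j may lie in the same row. *)
lemma maslov_summand_add_writhe_summand:
  assumes "i < n" "j < n"
  shows "maslov_summand sX sO i j + writhe_summand sX sO j i
    = of_bool (sX j = sO i \<and> i < j) - of_bool (j = i \<and> sX i < sO i)"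
proof -
  have distinct: "sX i \<noteq> sO i" "sX j \<noteq> sO j" "i \<noteq> j \<Longrightarrow> sX i \<noteq> sX j \<and> sO i \<noteq> sO j"
    using assms sX_neq_sO sX_eq_iff sO_eq_iff by auto
  show ?thesis
  proof (cases i j rule: linorder_cases)
    case less
    then show ?thesis
      using of_bool_less_add_of_bool_less[of "sX i" "sX j"] of_bool_less_add_of_bool_less[of "sO i" "sO j"]
        of_bool_less_add_of_bool_less[of "sO i" "sX j"] of_bool_le_add_of_bool_less[of "sX i" "sO j"]
        distinct(3)
      unfolding maslov_summand_def writhe_summand_def by (simp add: eq_commute[of "sX j"])
  qed (use distinct in \<open>auto simp: maslov_summand_def writhe_summand_def less_le\<close>)
qed

lemma sum_maslov_summand_add_sum_writhe_summand:
  "(\<Sum>i<n. \<Sum>j<n. maslov_summand sX sO i j) + (\<Sum>i<n. \<Sum>j<n. writhe_summand sX sO i j)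
   = (\<Sum>i<n. of_bool (i < xcol n sX (sO i))) - (\<Sum>i<n. of_bool (sX i < sO i))"
proof -
  have row: "(\<Sum>j<n. of_bool (sX j = sO i \<and> i < j)) = (of_bool (i < xcol n sX (sO i)) :: int)"
    if "i < n" for i
    unfolding xcol_def
    by (rule sum_of_bool_eq_at_inv_into[OF finite_lessThan bij_sX]) (simp add: that sO_less)
  have diag: "(\<Sum>j<n. of_bool (j = i \<and> sX i < sO i)) = (of_bool (sX i < sO i) :: int)"
    if "i < n" for i
    using sum_of_bool_eq_conj[of "{..<n}" i "\<lambda>_. sX i < sO i"] that by simp
  show ?thesis
    unfolding sum.swap[of "\<lambda>i j. writhe_summand sX sO i j"] sum.distrib[symmetric] sum_subtractf[symmetric]
    by (intro sum.cong refl) (simp add: maslov_summand_add_writhe_summand row diag sum_subtractf)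
qed

(* Both #{i. ocol (sX i) < i} and #{i. i < xcol (sO i)} count the rows whose O lies west of
   their X. *)
lemma right_cusps_add_card:
  "right_cusps n sX sO + card {i. i < n \<and> sX i < sO i}
    = up_cusps n sX sO + card {i. i < n \<and> i < xcol n sX (sO i)}"
proof -
  have rows: "(\<Sum>i<n. of_bool (ocol n sO (sX i) < i)) = (\<Sum>i<n. of_bool (i < xcol n sX (sO i)) :: int)"
    using sum_reindex_sX[of "\<lambda>r. of_bool (ocol n sO r < xcol n sX r) :: int"]
      sum_reindex_sO[of "\<lambda>r. of_bool (ocol n sO r < xcol n sX r) :: int"]
    by (simp add: xcol_sX ocol_sO)
  have corner: "of_bool (ocol n sO (sX i) < i \<and> sO i < sX i) + of_bool (sX i < sO i)
      = of_bool (i < ocol n sO (sX i) \<and> sX i < sO i) + (of_bool (ocol n sO (sX i) < i) :: int)"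
    if "i < n" for i
  proof -
    have "ocol n sO (sX i) \<noteq> i" "sX i \<noteq> sO i"
      using that sO_ocol[OF sX_less] sX_neq_sO by metis+
    then show ?thesis
      by (cases "ocol n sO (sX i)" i rule: linorder_cases) auto
  qed
  have "int (right_cusps n sX sO + card {i. i < n \<and> sX i < sO i})
      = (\<Sum>i<n. (of_bool (ocol n sO (sX i) < i \<and> sO i < sX i) + of_bool (sX i < sO i))
          + of_bool (xcol n sX (sO i) < i \<and> sX i < sO i))"
    unfolding right_cusps_def of_nat_add of_nat_card_eq_sum_of_bool by (simp add: sum.distrib)
  also have "\<dots> = (\<Sum>i<n. (of_bool (i < ocol n sO (sX i) \<and> sX i < sO i) + of_bool (ocol n sO (sX i) < i))
          + of_bool (xcol n sX (sO i) < i \<and> sX i < sO i))"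
    by (intro sum.cong refl) (simp only: corner lessThan_iff)
  also have "\<dots> = int (up_cusps n sX sO + card {i. i < n \<and> i < xcol n sX (sO i)})"
    unfolding up_cusps_def of_nat_add of_nat_card_eq_sum_of_bool rows[symmetric] by (simp add: sum.distrib)
  finally show ?thesis
    by (simp only: of_nat_eq_iff)
qed

theorem maslov_x_minus:
  "maslov n sO (x_minus n sX) = of_int (- grid_writhe n sX sO - int (up_cusps n sX sO) + 1)"
proof -
  have "int (right_cusps n sX sO) + (\<Sum>i<n. of_bool (sX i < sO i))
      = int (up_cusps n sX sO) + (\<Sum>i<n. of_bool (i < xcol n sX (sO i)))"
    using right_cusps_add_card unfolding of_nat_card_eq_sum_of_bool[symmetric] by presburger
  then have "1 + (\<Sum>i<n. \<Sum>j<n. maslov_summand sX sO i j) = - grid_writhe n sX sO - int (up_cusps n sX sO) + 1"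
    using sum_maslov_summand_add_sum_writhe_summand grid_writhe_add_right_cusps by linarith
  then show ?thesis
    unfolding maslov_x_minus_eq_sum by (simp only:)
qed

end

theorem lemma6p4:
  fixes n :: nat and sX sO :: "nat \<Rightarrow> nat"
  assumes "knot_grid n sX sO"
  shows "maslov n sO (x_plus n sX) =
           real_of_int (- grid_writhe n sX sO - int (down_cusps n sX sO) + 1) \<and>
         maslov n sO (x_minus n sX) =
           real_of_int (- grid_writhe n sX sO - int (up_cusps n sX sO) + 1)"
proof -
  interpret grid n sX sO
    using assms by unfold_locales (simp add: knot_grid_def)
  interpret swapped: grid n sO sX
    by unfold_locales (rule grid_diagram_swap[OF grid_diagram])
  have "maslov n sO (x_plus n sX) = maslov n sX (x_minus n sO)"
    by (rule maslov_x_plus_eq_maslov_swap)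
  also have "\<dots> = of_int (- grid_writhe n sO sX - int (up_cusps n sO sX) + 1)"
    by (rule swapped.maslov_x_minus)
  also have "\<dots> = of_int (- grid_writhe n sX sO - int (down_cusps n sX sO) + 1)"
    by (simp only: grid_writhe_swap up_cusps_swap)
  finally show ?thesis
    using maslov_x_minus by simp
qed

end
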